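(* If $\rho$ is a function quasi-norm over a $\sigma$-finite measure space $(\Omega,\Sigma,\mu)$ with the weak Fatou property, then $\rho$ has the rough Fatou property.
   Context: $L_0^+(\mu)$: measurable functions $\Omega\to[0,\infty]$ modulo a.e. equality. A function quasi-norm is $\rho\colon L_0^+(\mu)\to[0,\infty]$ with (F1) $\rho(tf)=t\rho(f)$, $t\ge0$; (F2) $f\le g$ a.e. $\Rightarrow\rho(f)\le\rho(g)$; (F3) $\rho(\chi_E)<\infty$ if $\mu(E)<\infty$; (F4) for all $E$ with $\mu(E)<\infty$ and $\varepsilon>0$ there is $\delta>0$ with $\mu(A)\le\varepsilon$ whenever $A\subseteq E$ is measurable with $\rho(\chi_A)\le\delta$; (F5) $\rho(f+g)\le\kappa(\rho(f)+\rho(g))$ for a constant $\kappa$. $\rho$ has the rough Fatou property if there is a constant $C$ with $\rho(\lim_nf_n)\le C\lim_n\rho(f_n)$ for every non-decreasing sequence $(f_n)$ in $L_0^+(\mu)$; it has the weak Fatou property if $\rho(\lim_nf_n)<\infty$ whenever $(f_n)$ is non-decreasing in $L_0^+(\mu)$ with $\lim_n\rho(f_n)<\infty$. *)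

theory Defs
  imports "HOL-Analysis.Analysis"
begin

text \<open>Elements of L_0^+(mu) are represented by Borel-measurable functions into ennreal
  (values in [0,infinity]); identification modulo a.e. equality is built into (F2),
  which makes rho invariant under a.e. equality. rho is only constrained on measurable functions.\<close>

definition function_quasi_norm :: "'a measure \<Rightarrow> (('a \<Rightarrow> ennreal) \<Rightarrow> ennreal) \<Rightarrow> bool" where
  "function_quasi_norm M \<rho> \<longleftrightarrow>
     \<comment> \<open>(F1)\<close>
     (\<forall>f \<in> borel_measurable M. \<forall>t::real. t \<ge> 0 \<longrightarrow>
        \<rho> (\<lambda>x. ennreal t * f x) = ennreal t * \<rho> f) \<and>
     \<comment> \<open>(F2)\<close>
     (\<forall>f \<in> borel_measurable M. \<forall>g \<in> borel_measurable M.
        (AE x in M. f x \<le> g x) \<longrightarrow> \<rho> f \<le> \<rho> g) \<and>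
     \<comment> \<open>(F3)\<close>
     (\<forall>E \<in> sets M. emeasure M E < \<infinity> \<longrightarrow> \<rho> (indicator E) < \<infinity>) \<and>
     \<comment> \<open>(F4)\<close>
     (\<forall>E \<in> sets M. emeasure M E < \<infinity> \<longrightarrow>
        (\<forall>\<epsilon>::real. \<epsilon> > 0 \<longrightarrow> (\<exists>\<delta>::real. \<delta> > 0 \<and>
           (\<forall>A \<in> sets M. A \<subseteq> E \<longrightarrow> \<rho> (indicator A) \<le> ennreal \<delta> \<longrightarrow>
               emeasure M A \<le> ennreal \<epsilon>)))) \<and>
     \<comment> \<open>(F5)\<close>
     (\<exists>\<kappa>::real. \<forall>f \<in> borel_measurable M. \<forall>g \<in> borel_measurable M.
        \<rho> (\<lambda>x. f x + g x) \<le> ennreal \<kappa> * (\<rho> f + \<rho> g))"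

text \<open>A non-decreasing sequence in L_0^+(mu): each term measurable, f_n \<le> f_{n+1} a.e.
  Its limit is (a.e.) the pointwise supremum.\<close>

definition nondecr_seq :: "'a measure \<Rightarrow> (nat \<Rightarrow> 'a \<Rightarrow> ennreal) \<Rightarrow> bool" where
  "nondecr_seq M f \<longleftrightarrow> (\<forall>n. f n \<in> borel_measurable M) \<and> (\<forall>n. AE x in M. f n x \<le> f (Suc n) x)"

definition rough_fatou :: "'a measure \<Rightarrow> (('a \<Rightarrow> ennreal) \<Rightarrow> ennreal) \<Rightarrow> bool" where
  "rough_fatou M \<rho> \<longleftrightarrow> (\<exists>C::real. \<forall>f. nondecr_seq M f \<longrightarrow>
      \<rho> (\<lambda>x. SUP n. f n x) \<le> ennreal C * (SUP n. \<rho> (f n)))"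

definition weak_fatou :: "'a measure \<Rightarrow> (('a \<Rightarrow> ennreal) \<Rightarrow> ennreal) \<Rightarrow> bool" where
  "weak_fatou M \<rho> \<longleftrightarrow> (\<forall>f. nondecr_seq M f \<longrightarrow>
      (SUP n. \<rho> (f n)) < \<infinity> \<longrightarrow> \<rho> (\<lambda>x. SUP n. f n x) < \<infinity>)"

end

theory Submission
  imports Defs
begin

text \<open>If rough Fatou fails, then for every k, after rescaling by (F1), there is a non-decreasing
  sequence F_k with all rho (F_k n) \<le> (2K)^-(k+1), where K is the constant of (F5), but
  rho (sup_n F_k n) \<ge> k + 1. The iterated quasi-triangle inequality costs a factor K^(j+1) on the
  j-th summand, so the diagonal sums h_n = F_0 n + ... + F_n n satisfy rho h_n \<le> sum_j 2^-(j+1) \<le> 1.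
  They are non-decreasing, hence rho (sup h_n) < \<infinity> by weak Fatou; yet sup h_n dominates every
  sup F_k, so rho (sup h_n) \<ge> k + 1 for all k.\<close>

lemma function_quasi_normD_scale:
  assumes "function_quasi_norm M \<rho>" "f \<in> borel_measurable M" "t \<ge> 0"
  shows "\<rho> (\<lambda>x. ennreal t * f x) = ennreal t * \<rho> f"
proof -
  have "\<forall>f \<in> borel_measurable M. \<forall>t::real. t \<ge> 0 \<longrightarrow>
          \<rho> (\<lambda>x. ennreal t * f x) = ennreal t * \<rho> f"
    using assms(1) unfolding function_quasi_norm_def by (elim conjE) assumption
  with assms(2,3) show ?thesis by blast
qed

lemma function_quasi_normD_mono:
  assumes "function_quasi_norm M \<rho>" "f \<in> borel_measurable M" "g \<in> borel_measurable M"
    and "AE x in M. f x \<le> g x"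
  shows "\<rho> f \<le> \<rho> g"
proof -
  have "\<forall>f \<in> borel_measurable M. \<forall>g \<in> borel_measurable M.
          (AE x in M. f x \<le> g x) \<longrightarrow> \<rho> f \<le> \<rho> g"
    using assms(1) unfolding function_quasi_norm_def by (elim conjE) assumption
  with assms(2-4) show ?thesis by blast
qed

lemma function_quasi_normE_triangle:
  assumes "function_quasi_norm M \<rho>"
  obtains K :: real where "K \<ge> 1"
    and "\<And>f g. f \<in> borel_measurable M \<Longrightarrow> g \<in> borel_measurable M \<Longrightarrow>
           \<rho> (\<lambda>x. f x + g x) \<le> ennreal K * (\<rho> f + \<rho> g)"
proof -
  have "\<exists>\<kappa>::real. \<forall>f \<in> borel_measurable M. \<forall>g \<in> borel_measurable M.
          \<rho> (\<lambda>x. f x + g x) \<le> ennreal \<kappa> * (\<rho> f + \<rho> g)"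
    using assms unfolding function_quasi_norm_def by (elim conjE) assumption
  then obtain \<kappa> :: real where \<kappa>: "\<forall>f \<in> borel_measurable M. \<forall>g \<in> borel_measurable M.
          \<rho> (\<lambda>x. f x + g x) \<le> ennreal \<kappa> * (\<rho> f + \<rho> g)"
    by blast
  show thesis
  proof (rule that)
    show "max \<kappa> 1 \<ge> 1" by simp
    fix f g :: "'a \<Rightarrow> ennreal"
    assume "f \<in> borel_measurable M" "g \<in> borel_measurable M"
    with \<kappa> have "\<rho> (\<lambda>x. f x + g x) \<le> ennreal \<kappa> * (\<rho> f + \<rho> g)" by blast
    also have "\<dots> \<le> ennreal (max \<kappa> 1) * (\<rho> f + \<rho> g)"
      by (intro mult_right_mono ennreal_leI) simp_all
    finally show "\<rho> (\<lambda>x. f x + g x) \<le> ennreal (max \<kappa> 1) * (\<rho> f + \<rho> g)" .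
  qed
qed

lemma quasi_triangle_sum:
  fixes \<rho> :: "('a \<Rightarrow> ennreal) \<Rightarrow> ennreal"
  assumes K: "K \<ge> 1"
    and triangle: "\<And>f g. f \<in> borel_measurable M \<Longrightarrow> g \<in> borel_measurable M \<Longrightarrow>
           \<rho> (\<lambda>x. f x + g x) \<le> ennreal K * (\<rho> f + \<rho> g)"
    and g: "\<And>k. g k \<in> borel_measurable M"
  shows "\<rho> (\<lambda>x. \<Sum>k\<le>n. g k x) \<le> (\<Sum>k\<le>n. ennreal (K ^ (k + 1)) * \<rho> (g k))"
  using g
proof (induction n arbitrary: g)
  case 0
  have "\<rho> (g 0) \<le> ennreal K * \<rho> (g 0)"
    using K mult_right_mono[of 1 "ennreal K"] by (simp add: ennreal_leI)
  then show ?case by simp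
next
  case (Suc n)
  have tail: "(\<lambda>x. \<Sum>k\<le>n. g (Suc k) x) \<in> borel_measurable M"
    using Suc.prems by auto
  have "\<rho> (\<lambda>x. \<Sum>k\<le>Suc n. g k x) = \<rho> (\<lambda>x. g 0 x + (\<Sum>k\<le>n. g (Suc k) x))"
    by (simp only: sum.atMost_Suc_shift)
  also have "\<dots> \<le> ennreal K * (\<rho> (g 0) + \<rho> (\<lambda>x. \<Sum>k\<le>n. g (Suc k) x))"
    using triangle[OF Suc.prems tail] .
  also have "\<dots> \<le> ennreal K * (\<rho> (g 0) + (\<Sum>k\<le>n. ennreal (K ^ (k + 1)) * \<rho> (g (Suc k))))"
    using Suc.IH[of "\<lambda>k. g (Suc k)"] Suc.prems by (intro mult_left_mono add_left_mono) auto
  also have "\<dots> = ennreal K * \<rho> (g 0) + (\<Sum>k\<le>n. ennreal (K ^ (Suc k + 1)) * \<rho> (g (Suc k)))"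
  proof -
    have "ennreal K * (ennreal (K ^ (k + 1)) * y) = ennreal (K ^ (Suc k + 1)) * y" for k y
      using K by (simp add: ennreal_mult' mult.assoc)
    then show ?thesis by (simp only: distrib_left sum_distrib_left)
  qed
  also have "\<dots> = (\<Sum>k\<le>Suc n. ennreal (K ^ (k + 1)) * \<rho> (g k))"
    by (simp only: sum.atMost_Suc_shift) simp
  finally show ?case .
qed

lemma quasi_triangle_sum_le_1:
  fixes \<rho> :: "('a \<Rightarrow> ennreal) \<Rightarrow> ennreal"
  assumes K: "K \<ge> 1"
    and triangle: "\<And>f g. f \<in> borel_measurable M \<Longrightarrow> g \<in> borel_measurable M \<Longrightarrow>
           \<rho> (\<lambda>x. f x + g x) \<le> ennreal K * (\<rho> f + \<rho> g)"
    and g: "\<And>k. g k \<in> borel_measurable M"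
    and small: "\<And>k. \<rho> (g k) \<le> ennreal (1 / (2 * K) ^ (k + 1))"
  shows "\<rho> (\<lambda>x. \<Sum>k\<le>n. g k x) \<le> 1"
proof -
  have "\<rho> (\<lambda>x. \<Sum>k\<le>n. g k x) \<le> (\<Sum>k\<le>n. ennreal (K ^ (k + 1)) * \<rho> (g k))"
    using quasi_triangle_sum[OF K triangle g] .
  also have "\<dots> \<le> (\<Sum>k\<le>n. ennreal (K ^ (k + 1)) * ennreal (1 / (2 * K) ^ (k + 1)))"
    by (intro sum_mono mult_left_mono small) simp
  also have "\<dots> = ennreal (\<Sum>k\<le>n. (1 / 2) ^ (k + 1))"
    using K by (simp add: ennreal_mult'[symmetric] power_divide power_mult_distrib)
  also have "\<dots> \<le> 1"
  proof -
    have "(\<Sum>k\<le>n. (1 / 2 :: real) ^ (k + 1)) = 1 - (1 / 2) ^ (n + 1)"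
      by (induction n) (auto simp: field_simps)
    then show ?thesis by simp
  qed
  finally show ?thesis .
qed

lemma nondecr_seq_AE_mono:
  assumes "nondecr_seq M f"
  shows "AE x in M. \<forall>m n. m \<le> n \<longrightarrow> f m x \<le> f n x"
proof -
  have "AE x in M. \<forall>n. f n x \<le> f (Suc n) x"
    using assms unfolding nondecr_seq_def by (simp add: AE_all_countable)
  then show ?thesis
  proof eventually_elim
    case (elim x)
    then show ?case using lift_Suc_mono_le[of "\<lambda>n. f n x"] by blast
  qed
qed

lemma borel_measurable_nondecr_seq_SUP:
  "nondecr_seq M f \<Longrightarrow> (\<lambda>x. SUP n. f n x) \<in> borel_measurable M"
  unfolding nondecr_seq_def by (simp add: borel_measurable_SUP)

lemma nondecr_seq_scale:
  assumes "nondecr_seq M f"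
  shows "nondecr_seq M (\<lambda>n x. c * f n x)"
  unfolding nondecr_seq_def
proof (intro conjI allI)
  fix n
  show "(\<lambda>x. c * f n x) \<in> borel_measurable M"
    using assms unfolding nondecr_seq_def by (simp add: borel_measurable_times_ennreal)
  have "AE x in M. f n x \<le> f (Suc n) x"
    using assms unfolding nondecr_seq_def by blast
  then show "AE x in M. c * f n x \<le> c * f (Suc n) x"
    by eventually_elim (rule mult_left_mono, simp_all)
qed

lemma nondecr_seq_diagonal_sum:
  assumes "\<And>k. nondecr_seq M (F k)"
  shows "nondecr_seq M (\<lambda>n x. \<Sum>k\<le>n. F k n x)"
  unfolding nondecr_seq_def
proof (intro conjI allI)
  fix n
  show "(\<lambda>x. \<Sum>k\<le>n. F k n x) \<in> borel_measurable M"
    using assms unfolding nondecr_seq_def by (simp add: borel_measurable_sum)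
  have "AE x in M. \<forall>k. F k n x \<le> F k (Suc n) x"
    using assms unfolding nondecr_seq_def by (simp add: AE_all_countable)
  then show "AE x in M. (\<Sum>k\<le>n. F k n x) \<le> (\<Sum>k\<le>Suc n. F k (Suc n) x)"
  proof eventually_elim
    case (elim x)
    then have "(\<Sum>k\<le>n. F k n x) \<le> (\<Sum>k\<le>n. F k (Suc n) x)"
      by (intro sum_mono) blast
    also have "\<dots> \<le> (\<Sum>k\<le>Suc n. F k (Suc n) x)"
      by (intro sum_mono2) auto
    finally show ?case .
  qed
qed

lemma AE_SUP_le_SUP_diagonal_sum:
  assumes "nondecr_seq M (F k)"
  shows "AE x in M. (SUP n. F k n x) \<le> (SUP n. \<Sum>j\<le>n. F j n x)"
  using nondecr_seq_AE_mono[OF assms]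
proof eventually_elim
  case (elim x)
  show ?case
  proof (rule SUP_least)
    fix n
    have "F k n x \<le> F k (max n k) x" by (rule elim[rule_format]) simp
    also have "\<dots> \<le> (\<Sum>j\<le>max n k. F j (max n k) x)" by (rule member_le_sum) simp_all
    also have "\<dots> \<le> (SUP n. \<Sum>j\<le>n. F j n x)" by (rule SUP_upper) simp
    finally show "F k n x \<le> (SUP n. \<Sum>j\<le>n. F j n x)" .
  qed
qed

lemma function_quasi_norm_SUP_le_SUP_diagonal_sum:
  assumes fqn: "function_quasi_norm M \<rho>" and F: "\<And>k. nondecr_seq M (F k)"
  shows "\<rho> (\<lambda>x. SUP n. F k n x) \<le> \<rho> (\<lambda>x. SUP n. \<Sum>j\<le>n. F j n x)"
proof (rule function_quasi_normD_mono[OF fqn])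
  show "AE x in M. (SUP n. F k n x) \<le> (SUP n. \<Sum>j\<le>n. F j n x)"
    by (rule AE_SUP_le_SUP_diagonal_sum[OF F])
qed (use F nondecr_seq_diagonal_sum[OF F] in \<open>simp_all add: borel_measurable_nondecr_seq_SUP\<close>)

lemma weak_fatouD:
  "weak_fatou M \<rho> \<Longrightarrow> nondecr_seq M f \<Longrightarrow> (SUP n. \<rho> (f n)) < \<infinity> \<Longrightarrow>
    \<rho> (\<lambda>x. SUP n. f n x) < \<infinity>"
  unfolding weak_fatou_def by blast

lemma weak_fatou_diagonal_sum_finite:
  assumes wf: "weak_fatou M \<rho>" and K: "K \<ge> 1"
    and triangle: "\<And>f g. f \<in> borel_measurable M \<Longrightarrow> g \<in> borel_measurable M \<Longrightarrow>
           \<rho> (\<lambda>x. f x + g x) \<le> ennreal K * (\<rho> f + \<rho> g)"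
    and F: "\<And>k. nondecr_seq M (F k)"
    and small: "\<And>k. (SUP n. \<rho> (F k n)) \<le> ennreal (1 / (2 * K) ^ (k + 1))"
  shows "\<rho> (\<lambda>x. SUP n. \<Sum>k\<le>n. F k n x) < \<infinity>"
proof -
  have "\<rho> (\<lambda>x. \<Sum>k\<le>n. F k n x) \<le> 1" for n
  proof (rule quasi_triangle_sum_le_1[OF K triangle])
    show "F k n \<in> borel_measurable M" for k
      using F unfolding nondecr_seq_def by blast
    show "\<rho> (F k n) \<le> ennreal (1 / (2 * K) ^ (k + 1))" for k
      using SUP_upper[of n UNIV "\<lambda>n. \<rho> (F k n)"] small[of k] by simp
  qed
  then have "(SUP n. \<rho> (\<lambda>x. \<Sum>k\<le>n. F k n x)) < \<infinity>"
    by (intro le_less_trans[OF SUP_least]) auto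
  then show ?thesis
    by (rule weak_fatouD[OF wf nondecr_seq_diagonal_sum[OF F]])
qed

lemma not_rough_fatouE:
  assumes fqn: "function_quasi_norm M \<rho>" and not_rf: "\<not> rough_fatou M \<rho>"
    and a: "a > 0" and b: "b > 0"
  obtains f where "nondecr_seq M f" "(SUP n. \<rho> (f n)) \<le> ennreal a"
    "ennreal b \<le> \<rho> (\<lambda>x. SUP n. f n x)"
proof -
  define C where "C = b / a"
  have C: "C > 0" unfolding C_def using a b by simp
  have "\<exists>f. nondecr_seq M f \<and>
          \<not> \<rho> (\<lambda>x. SUP n. f n x) \<le> ennreal C * (SUP n. \<rho> (f n))"
    using not_rf unfolding rough_fatou_def by simp
  then obtain f where f: "nondecr_seq M f"
    and violation: "ennreal C * (SUP n. \<rho> (f n)) < \<rho> (\<lambda>x. SUP n. f n x)"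
    unfolding not_le by blast
  have "(SUP n. \<rho> (f n)) \<noteq> \<infinity>"
  proof
    assume "(SUP n. \<rho> (f n)) = \<infinity>"
    with violation C show False by (simp add: ennreal_mult_top)
  qed
  then obtain s where s: "(SUP n. \<rho> (f n)) = ennreal s" "s \<ge> 0"
    by (cases "SUP n. \<rho> (f n)") auto
  \<comment> \<open>Rescaling by b / \<epsilon>, for a real \<epsilon> strictly between C * s and rho (sup_n f n),
    also works when s = 0 or rho (sup_n f n) = \<infinity>.\<close>
  from violation obtain y where y: "ennreal C * ennreal s < y" "y < \<rho> (\<lambda>x. SUP n. f n x)"
    unfolding s(1) using dense by blast
  then obtain \<epsilon> where \<epsilon>: "y = ennreal \<epsilon>" "\<epsilon> \<ge> 0"
    by (cases y) auto
  have "C * s \<ge> 0" using C s(2) by simp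
  with y(1) \<epsilon> C have "C * s < \<epsilon>"
    by (simp add: ennreal_mult'[symmetric] ennreal_less_iff)
  with \<open>C * s \<ge> 0\<close> have "\<epsilon> > 0" by linarith
  define t where "t = b / \<epsilon>"
  have t: "t \<ge> 0" unfolding t_def using b \<open>\<epsilon> > 0\<close> by simp
  have "b * s \<le> a * \<epsilon>"
    using \<open>C * s < \<epsilon>\<close> a unfolding C_def by (simp add: field_simps)
  then have "t * s \<le> a"
    using \<open>\<epsilon> > 0\<close> unfolding t_def by (simp add: field_simps)
  have f_meas: "f n \<in> borel_measurable M" for n
    using f unfolding nondecr_seq_def by blast
  show thesis
  proof (rule that)
    show "nondecr_seq M (\<lambda>n x. ennreal t * f n x)"
      using f by (rule nondecr_seq_scale)
    have "(SUP n. \<rho> (\<lambda>x. ennreal t * f n x)) = ennreal t * ennreal s"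
      using function_quasi_normD_scale[OF fqn f_meas t] s(1)
      by (simp add: SUP_mult_left_ennreal[symmetric])
    also have "\<dots> \<le> ennreal a"
      using \<open>t * s \<le> a\<close> t by (simp add: ennreal_mult'[symmetric] ennreal_leI)
    finally show "(SUP n. \<rho> (\<lambda>x. ennreal t * f n x)) \<le> ennreal a" .
    have "ennreal b = ennreal t * ennreal \<epsilon>"
      using t \<open>\<epsilon> > 0\<close> by (simp add: ennreal_mult'[symmetric] t_def)
    also have "\<dots> \<le> ennreal t * \<rho> (\<lambda>x. SUP n. f n x)"
      using y(2) \<epsilon>(1) by (intro mult_left_mono) simp_all
    also have "\<dots> = \<rho> (\<lambda>x. SUP n. ennreal t * f n x)"
      using function_quasi_normD_scale[OF fqn borel_measurable_nondecr_seq_SUP[OF f] t]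
      by (simp add: SUP_mult_left_ennreal[symmetric])
    finally show "ennreal b \<le> \<rho> (\<lambda>x. SUP n. ennreal t * f n x)" .
  qed
qed

theorem proposition3p15:
  fixes M :: "'a measure" and \<rho> :: "('a \<Rightarrow> ennreal) \<Rightarrow> ennreal"
  assumes "sigma_finite_measure M"
    and "function_quasi_norm M \<rho>"
    and "weak_fatou M \<rho>"
  shows "rough_fatou M \<rho>"
proof (rule ccontr)
  assume not_rf: "\<not> rough_fatou M \<rho>"
  obtain K where K: "K \<ge> 1" and triangle: "\<And>f g. f \<in> borel_measurable M \<Longrightarrow>
      g \<in> borel_measurable M \<Longrightarrow> \<rho> (\<lambda>x. f x + g x) \<le> ennreal K * (\<rho> f + \<rho> g)"
    using function_quasi_normE_triangle[OF assms(2)] by blast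
  have "\<exists>f. nondecr_seq M f \<and> (SUP n. \<rho> (f n)) \<le> ennreal (1 / (2 * K) ^ (k + 1)) \<and>
      ennreal (Suc k) \<le> \<rho> (\<lambda>x. SUP n. f n x)" for k
    by (rule not_rough_fatouE[OF assms(2) not_rf, of "1 / (2 * K) ^ (k + 1)" "Suc k"])
      (use K in auto)
  then obtain F where F: "\<And>k. nondecr_seq M (F k)"
    and F_small: "\<And>k. (SUP n. \<rho> (F k n)) \<le> ennreal (1 / (2 * K) ^ (k + 1))"
    and F_large: "\<And>k. ennreal (Suc k) \<le> \<rho> (\<lambda>x. SUP n. F k n x)"
    by metis
  have "\<rho> (\<lambda>x. SUP n. \<Sum>k\<le>n. F k n x) < \<infinity>"
    using assms(3) K triangle F F_small by (rule weak_fatou_diagonal_sum_finite)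
  then obtain r where r: "\<rho> (\<lambda>x. SUP n. \<Sum>k\<le>n. F k n x) = ennreal r" "r \<ge> 0"
    using less_top_ennreal by auto
  have "real (Suc k) \<le> r" for k
  proof -
    have "ennreal (Suc k) \<le> ennreal r"
      using F_large[of k] function_quasi_norm_SUP_le_SUP_diagonal_sum[where F = F and k = k, OF assms(2) F]
      unfolding r(1) by (rule order_trans)
    with r(2) show ?thesis by (simp only: ennreal_le_iff)
  qed
  from this[of "nat \<lceil>r\<rceil>"] show False by linarith
qed

end
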